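(* If $x\in CBV[0,1]$ and $A\in\widehat{\Omega}[0,1]$, then the Riemann–Stieltjes integral $\int_0^1A(s)\,dx(s)$ exists.
   Context: $CBV[0,1]$ denotes the continuous real functions of bounded Jordan variation on $[0,1]$. For $\varepsilon>0$ and $a<b$, a bounded $A\colon[a,b]\to\mathbb R$ belongs to $\Omega_\varepsilon[a,b]$ if there exists $\delta>0$ such that $\operatorname{osc}_{[t,s]}A\le\varepsilon$ whenever $t,s\in[a,b]$ and $0\le s-t\le\delta$, where $\operatorname{osc}_{[t,s]}A=\sup_{t\le\tau\le\sigma\le s}|A(\sigma)-A(\tau)|$. $\Omega[0,1]$ is the set of bounded $A\colon[0,1]\to\mathbb R$ such that for every $\varepsilon>0$ there is $a\in(0,1)$ with $A|_{[0,a]}\in\Omega_\varepsilon[0,a]$ and $A|_{[a,1]}$ of bounded variation on $[a,1]$. $\widehat{\Omega}[0,1]=\Omega[0,1]\cup C[0,1]\cup BV[0,1]$. *)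

theory Defs
  imports "HOL-Analysis.Analysis"
begin

definition is_partition :: "real \<Rightarrow> real \<Rightarrow> nat \<Rightarrow> (nat \<Rightarrow> real) \<Rightarrow> bool" where
  "is_partition a b n t \<longleftrightarrow> t 0 = a \<and> t n = b \<and> (\<forall>i<n. t i < t (Suc i))"

definition bounded_variation_on :: "(real \<Rightarrow> real) \<Rightarrow> real \<Rightarrow> real \<Rightarrow> bool" where
  "bounded_variation_on A a b \<longleftrightarrow>
     (\<exists>M. \<forall>n t. is_partition a b n t \<longrightarrow> (\<Sum>i<n. \<bar>A (t (Suc i)) - A (t i)\<bar>) \<le> M)"

definition osc :: "(real \<Rightarrow> real) \<Rightarrow> real \<Rightarrow> real \<Rightarrow> real" where
  "osc A t s = (SUP p\<in>{(\<tau>,\<sigma>). t \<le> \<tau> \<and> \<tau> \<le> \<sigma> \<and> \<sigma> \<le> s}. \<bar>A (snd p) - A (fst p)\<bar>)"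

definition bounded_on :: "(real \<Rightarrow> real) \<Rightarrow> real \<Rightarrow> real \<Rightarrow> bool" where
  "bounded_on A a b \<longleftrightarrow> (\<exists>M. \<forall>s\<in>{a..b}. \<bar>A s\<bar> \<le> M)"

definition Omega_eps :: "real \<Rightarrow> real \<Rightarrow> real \<Rightarrow> (real \<Rightarrow> real) \<Rightarrow> bool" where
  "Omega_eps \<epsilon> a b A \<longleftrightarrow> bounded_on A a b \<and>
     (\<exists>\<delta>>0. \<forall>t\<in>{a..b}. \<forall>s\<in>{a..b}. 0 \<le> s - t \<and> s - t \<le> \<delta> \<longrightarrow> osc A t s \<le> \<epsilon>)"

definition Omega01 :: "(real \<Rightarrow> real) \<Rightarrow> bool" where
  "Omega01 A \<longleftrightarrow> bounded_on A 0 1 \<and>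
     (\<forall>\<epsilon>>0. \<exists>a\<in>{0<..<1}. Omega_eps \<epsilon> 0 a A \<and> bounded_variation_on A a 1)"

definition Omega_hat01 :: "(real \<Rightarrow> real) \<Rightarrow> bool" where
  "Omega_hat01 A \<longleftrightarrow> Omega01 A \<or> continuous_on {0..1} A \<or> bounded_variation_on A 0 1"

definition RS_sum :: "(real \<Rightarrow> real) \<Rightarrow> (real \<Rightarrow> real) \<Rightarrow> nat \<Rightarrow> (nat \<Rightarrow> real) \<Rightarrow> (nat \<Rightarrow> real) \<Rightarrow> real" where
  "RS_sum A x n t \<tau> = (\<Sum>i<n. A (\<tau> i) * (x (t (Suc i)) - x (t i)))"

definition RS_integrable :: "(real \<Rightarrow> real) \<Rightarrow> (real \<Rightarrow> real) \<Rightarrow> real \<Rightarrow> real \<Rightarrow> bool" where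
  "RS_integrable A x a b \<longleftrightarrow>
     (\<exists>I. \<forall>\<epsilon>>0. \<exists>\<delta>>0. \<forall>n t \<tau>.
        is_partition a b n t \<and> (\<forall>i<n. t (Suc i) - t i < \<delta>) \<and>
        (\<forall>i<n. t i \<le> \<tau> i \<and> \<tau> i \<le> t (Suc i))
        \<longrightarrow> \<bar>RS_sum A x n t \<tau> - I\<bar> < \<epsilon>)"

end

theory Submission
  imports Defs
begin

text \<open>Every \<open>A\<close> in \<open>\<Omega>-hat[0,1]\<close> is regulated: for every \<open>\<epsilon> > 0\<close> each point has one-sided punctured
  neighbourhoods on which \<open>A\<close> oscillates by at most \<open>\<epsilon>\<close>. For functions of bounded variation this
  holds because otherwise arbitrarily many disjoint jumps of size \<open>\<epsilon>\<close> could be strung into one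
  monotone chain; for \<open>\<Omega>[0,1]\<close> it follows from the \<open>\<Omega>\<^sub>\<epsilon>\<close> condition near 0 and bounded variation
  away from 0. By compactness a regulated function is uniformly within \<open>\<epsilon>\<close> of a step function with
  finitely many jumps. Step functions are Riemann--Stieltjes integrable against a continuous \<open>x\<close>,
  one jump at a time, and since \<open>x\<close> has bounded variation, uniformly close integrands have close
  Riemann--Stieltjes sums; so the integrals of the step approximations form a Cauchy sequence whose
  limit is the integral of \<open>A\<close>.\<close>

section \<open>Partitions and variation\<close>

abbreviation var_sum :: "(real \<Rightarrow> real) \<Rightarrow> nat \<Rightarrow> (nat \<Rightarrow> real) \<Rightarrow> real" where
  "var_sum A n t \<equiv> \<Sum>i<n. \<bar>A (t (Suc i)) - A (t i)\<bar>"

definition osc_le_on :: "real \<Rightarrow> (real \<Rightarrow> real) \<Rightarrow> real set \<Rightarrow> bool" where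
  "osc_le_on \<epsilon> A S \<longleftrightarrow> (\<forall>u\<in>S. \<forall>v\<in>S. \<bar>A v - A u\<bar> \<le> \<epsilon>)"

lemma partition_mono:
  assumes "is_partition a b n t" "i \<le> j" "j \<le> n"
  shows "t i \<le> t j"
  using assms(2,3)
proof (induction rule: dec_induct)
  case (step k)
  then have "t k < t (Suc k)" using assms(1) unfolding is_partition_def by simp
  with step show ?case by simp
qed simp

lemma partition_strict_mono:
  assumes "is_partition a b n t" "i < j" "j \<le> n"
  shows "t i < t j"
proof -
  have "t i < t (Suc i)" using assms unfolding is_partition_def by simp
  also have "\<dots> \<le> t j" using partition_mono[OF assms(1)] assms by simp
  finally show ?thesis .
qed

lemma partition_in_interval:
  assumes "is_partition a b n t" "i \<le> n"
  shows "t i \<in> {a..b}"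
  using partition_mono[OF assms(1), of 0 i] partition_mono[OF assms(1), of i n] assms
  unfolding is_partition_def by simp

lemma partition_prepend:
  assumes "is_partition u b n t" "a \<le> u"
  obtains n' t' where "is_partition a b n' t'" "var_sum A n' t' = \<bar>A u - A a\<bar> + var_sum A n t"
proof (cases "a = u")
  case True
  then show ?thesis using assms that by simp
next
  case False
  define t' where "t' i = (if i = 0 then a else t (i - 1))" for i
  have "is_partition a b (Suc n) t'"
    using assms False unfolding is_partition_def t'_def by (auto simp: less_Suc_eq_0_disj)
  moreover have "var_sum A (Suc n) t' = \<bar>A u - A a\<bar> + var_sum A n t"
    using assms(1) unfolding sum.lessThan_Suc_shift t'_def is_partition_def by simp
  ultimately show ?thesis by (rule that)
qed

text \<open>The boundary terms make the statement strong enough to prepend one point per induction step.\<close>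
lemma chain_var_sum_le_partition:
  assumes "\<forall>j<m. w j \<le> w (Suc j)" "a \<le> w 0" "w m \<le> b"
  obtains n t where "is_partition a b n t"
    "\<bar>A (w 0) - A a\<bar> + var_sum A m w + \<bar>A b - A (w m)\<bar> \<le> var_sum A n t"
  using assms
proof (induction m arbitrary: a w thesis)
  case 0
  obtain n t where nt: "is_partition (w 0) b n t" "var_sum A n t = \<bar>A b - A (w 0)\<bar>"
  proof (cases "w 0 = b")
    case True
    then show ?thesis using that[of 0 "\<lambda>_. b"] unfolding is_partition_def by simp
  next
    case False
    then show ?thesis using 0 that[of 1 "\<lambda>i. if i = 0 then w 0 else b"]
      unfolding is_partition_def by auto
  qed
  obtain n' t' where "is_partition a b n' t'" "var_sum A n' t' = \<bar>A (w 0) - A a\<bar> + var_sum A n t"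
    using partition_prepend[OF nt(1) \<open>a \<le> w 0\<close>] .
  with nt(2) show ?case using "0.prems"(1)[of n' t'] by simp
next
  case (Suc m)
  obtain n t where nt: "is_partition (w 0) b n t"
    "\<bar>A (w 1) - A (w 0)\<bar> + var_sum A m (\<lambda>j. w (Suc j)) + \<bar>A b - A (w (Suc m))\<bar> \<le> var_sum A n t"
    using Suc.IH[of "w 0" "\<lambda>j. w (Suc j)"] Suc.prems(2-) by auto
  obtain n' t' where "is_partition a b n' t'" "var_sum A n' t' = \<bar>A (w 0) - A a\<bar> + var_sum A n t"
    using partition_prepend[OF nt(1) \<open>a \<le> w 0\<close>] .
  moreover have "var_sum A (Suc m) w = \<bar>A (w 1) - A (w 0)\<bar> + var_sum A m (\<lambda>j. w (Suc j))"
    by (subst sum.lessThan_Suc_shift) simp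
  ultimately show ?case using nt(2) Suc.prems(1)[of n' t'] by simp
qed

lemma bv_chain_bound:
  assumes "bounded_variation_on A a b"
  obtains M where "\<And>m w. \<forall>j<m. w j \<le> w (Suc j) \<Longrightarrow> a \<le> w 0 \<Longrightarrow> w m \<le> b \<Longrightarrow> var_sum A m w \<le> M"
proof -
  obtain M where M: "\<And>n t. is_partition a b n t \<Longrightarrow> var_sum A n t \<le> M"
    using assms unfolding bounded_variation_on_def by blast
  show ?thesis
  proof (rule that)
    fix m w assume "\<forall>j<m. w j \<le> w (Suc j)" "a \<le> w 0" "w m \<le> b"
    then obtain n t where "is_partition a b n t"
      "\<bar>A (w 0) - A a\<bar> + var_sum A m w + \<bar>A b - A (w m)\<bar> \<le> var_sum A n t"
      by (rule chain_var_sum_le_partition)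
    with M[of n t] show "var_sum A m w \<le> M" by simp
  qed
qed

lemma bounded_variation_on_reflect:
  assumes "bounded_variation_on A a b"
  shows "bounded_variation_on (\<lambda>s. A (- s)) (- b) (- a)"
proof -
  obtain M where M: "\<And>n t. is_partition a b n t \<Longrightarrow> var_sum A n t \<le> M"
    using assms unfolding bounded_variation_on_def by blast
  have "var_sum (\<lambda>s. A (- s)) n t \<le> M" if t: "is_partition (- b) (- a) n t" for n t
  proof -
    define t' where "t' i = - t (n - i)" for i
    have "is_partition a b n t'"
      using t unfolding is_partition_def t'_def by (auto simp: Suc_diff_Suc[symmetric])
    moreover have "var_sum A n t' = var_sum (\<lambda>s. A (- s)) n t"
      by (subst sum.nat_diff_reindex[symmetric])
        (simp add: t'_def Suc_diff_Suc abs_minus_commute)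
    ultimately show ?thesis using M by metis
  qed
  then show ?thesis unfolding bounded_variation_on_def by blast
qed

lemma osc_le_on_subset: "osc_le_on \<epsilon> A T \<Longrightarrow> S \<subseteq> T \<Longrightarrow> osc_le_on \<epsilon> A S"
  unfolding osc_le_on_def by blast

lemma bv_left_osc:
  assumes "bounded_variation_on A a b" "\<epsilon> > 0"
  shows "\<exists>h>0. osc_le_on \<epsilon> A ({a..b} \<inter> {c - h<..<c})"
proof (rule ccontr)
  assume no_h: "\<not> ?thesis"
  have jump: "\<exists>u v. a \<le> u \<and> u \<le> v \<and> v \<le> b \<and> c - h < u \<and> v < c \<and> \<epsilon> < \<bar>A v - A u\<bar>"
    if h: "h > 0" for h
  proof -
    obtain u v where uv: "u \<in> {a..b} \<inter> {c - h<..<c}" "v \<in> {a..b} \<inter> {c - h<..<c}"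
      "\<epsilon> < \<bar>A v - A u\<bar>"
    proof -
      from no_h h have "\<not> osc_le_on \<epsilon> A ({a..b} \<inter> {c - h<..<c})" by blast
      then show thesis using that unfolding osc_le_on_def by (auto simp: not_le)
    qed
    show ?thesis
    proof (cases "u \<le> v")
      case True
      with uv show ?thesis by auto
    next
      case False
      with uv show ?thesis by (intro exI[of _ v] exI[of _ u]) (auto simp: abs_minus_commute)
    qed
  qed
  obtain M where M: "\<And>m w. \<forall>j<m. w j \<le> w (Suc j) \<Longrightarrow> a \<le> w 0 \<Longrightarrow> w m \<le> b \<Longrightarrow> var_sum A m w \<le> M"
    using bv_chain_bound[OF assms(1)] by blast
  have chain: "\<exists>w. (\<forall>j<2*K. w j \<le> w (Suc j)) \<and> a \<le> w 0 \<and> w (2*K) < c \<and> w (2*K) \<le> b \<and>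
      real K * \<epsilon> \<le> var_sum A (2*K) w" for K
  proof (induction K)
    case 0
    from jump[of 1] obtain u where "a \<le> u" "u \<le> b" "u < c" by force
    then show ?case by (intro exI[of _ "\<lambda>_. u"]) auto
  next
    case (Suc K)
    then obtain w where w: "\<forall>j<2*K. w j \<le> w (Suc j)" "a \<le> w 0" "w (2*K) < c"
      "real K * \<epsilon> \<le> var_sum A (2*K) w" by blast
    from jump[of "c - w (2*K)"] w(3) obtain u v where uv: "a \<le> u" "v \<le> b" "w (2*K) < u" "u \<le> v"
      "v < c" "\<epsilon> < \<bar>A v - A u\<bar>" by auto
    define w' where "w' = w(Suc (2*K) := u, Suc (Suc (2*K)) := v)"
    have "var_sum A (2*K) w' = var_sum A (2*K) w"
      by (rule sum.cong) (auto simp: w'_def)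
    then have "var_sum A (2 * Suc K) w' = var_sum A (2*K) w + \<bar>A u - A (w (2*K))\<bar> + \<bar>A v - A u\<bar>"
      by (simp add: w'_def)
    then have "real (Suc K) * \<epsilon> \<le> var_sum A (2 * Suc K) w'"
      using w(4) uv(6) by (simp add: algebra_simps)
    moreover have "w' j \<le> w' (Suc j)" if "j < 2 * Suc K" for j
    proof -
      have "j < 2*K \<or> j = 2*K \<or> j = Suc (2*K)" using that by auto
      then show ?thesis using w(1) uv by (auto simp: w'_def)
    qed
    ultimately show ?case using uv w(2) by (intro exI[of _ w']) (simp add: w'_def)
  qed
  obtain K :: nat where "M / \<epsilon> < real K" using reals_Archimedean2 by blast
  then have "M < real K * \<epsilon>" using assms(2) by (simp add: field_simps)
  moreover obtain w where "\<forall>j<2*K. w j \<le> w (Suc j)" "a \<le> w 0" "w (2*K) \<le> b"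
      "real K * \<epsilon> \<le> var_sum A (2*K) w"
    using chain by blast
  moreover from calculation(2-4) have "var_sum A (2*K) w \<le> M" by (rule M)
  ultimately show False by linarith
qed

lemma bv_right_osc:
  assumes "bounded_variation_on A a b" "\<epsilon> > 0"
  shows "\<exists>h>0. osc_le_on \<epsilon> A ({a..b} \<inter> {c<..<c + h})"
proof -
  obtain h where h: "h > 0" "osc_le_on \<epsilon> (\<lambda>s. A (- s)) ({- b..- a} \<inter> {- c - h<..<- c})"
    using bv_left_osc[OF bounded_variation_on_reflect[OF assms(1)] assms(2)] by auto
  have "osc_le_on \<epsilon> A ({a..b} \<inter> {c<..<c + h})"
    unfolding osc_le_on_def
  proof (intro ballI)
    fix u v assume "u \<in> {a..b} \<inter> {c<..<c + h}" "v \<in> {a..b} \<inter> {c<..<c + h}"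
    then have "- u \<in> {- b..- a} \<inter> {- c - h<..<- c}" "- v \<in> {- b..- a} \<inter> {- c - h<..<- c}"
      by auto
    then have "\<bar>A (- (- v)) - A (- (- u))\<bar> \<le> \<epsilon>"
      using h(2) unfolding osc_le_on_def by blast
    then show "\<bar>A v - A u\<bar> \<le> \<epsilon>" by simp
  qed
  with h(1) show ?thesis by blast
qed

section \<open>Regulated functions\<close>

definition eps_regulated :: "real \<Rightarrow> (real \<Rightarrow> real) \<Rightarrow> real \<Rightarrow> real \<Rightarrow> bool" where
  "eps_regulated \<epsilon> A a b \<longleftrightarrow> (\<forall>c\<in>{a..b}. \<exists>h>0.
     osc_le_on \<epsilon> A ({a..b} \<inter> {c - h<..<c}) \<and> osc_le_on \<epsilon> A ({a..b} \<inter> {c<..<c + h}))"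

lemma eps_regulatedI:
  assumes "\<And>c. c \<in> {a..b} \<Longrightarrow> \<exists>h>0. osc_le_on \<epsilon> A ({a..b} \<inter> {c - h<..<c})"
    and "\<And>c. c \<in> {a..b} \<Longrightarrow> \<exists>h>0. osc_le_on \<epsilon> A ({a..b} \<inter> {c<..<c + h})"
  shows "eps_regulated \<epsilon> A a b"
  unfolding eps_regulated_def
proof
  fix c assume "c \<in> {a..b}"
  then obtain h1 h2 where "h1 > 0" "h2 > 0" "osc_le_on \<epsilon> A ({a..b} \<inter> {c - h1<..<c})"
    "osc_le_on \<epsilon> A ({a..b} \<inter> {c<..<c + h2})"
    using assms by blast
  moreover have "{a..b} \<inter> {c - min h1 h2<..<c} \<subseteq> {a..b} \<inter> {c - h1<..<c}"
    "{a..b} \<inter> {c<..<c + min h1 h2} \<subseteq> {a..b} \<inter> {c<..<c + h2}"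
    by auto
  ultimately show "\<exists>h>0. osc_le_on \<epsilon> A ({a..b} \<inter> {c - h<..<c}) \<and> osc_le_on \<epsilon> A ({a..b} \<inter> {c<..<c + h})"
    by (intro exI[of _ "min h1 h2"]) (auto intro: osc_le_on_subset)
qed

lemma eps_regulated_if_bv:
  assumes "bounded_variation_on A a b" "\<epsilon> > 0"
  shows "eps_regulated \<epsilon> A a b"
  using bv_left_osc[OF assms] bv_right_osc[OF assms] by (rule eps_regulatedI)

lemma eps_regulated_if_continuous:
  assumes "continuous_on {a..b} A" "\<epsilon> > 0"
  shows "eps_regulated \<epsilon> A a b"
proof -
  have near: "\<exists>d>0. osc_le_on \<epsilon> A ({a..b} \<inter> {c - d<..<c + d})" if "c \<in> {a..b}" for c
  proof -
    have "\<forall>e>0. \<exists>d>0. \<forall>y\<in>{a..b}. dist y c < d \<longrightarrow> dist (A y) (A c) < e"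
      using assms(1) that unfolding continuous_on_iff by blast
    then obtain d where d: "d > 0" "\<forall>y\<in>{a..b}. dist y c < d \<longrightarrow> dist (A y) (A c) < \<epsilon>/2"
      using \<open>\<epsilon> > 0\<close> half_gt_zero by blast
    have "osc_le_on \<epsilon> A ({a..b} \<inter> {c - d<..<c + d})"
      unfolding osc_le_on_def
    proof (intro ballI)
      fix u v assume "u \<in> {a..b} \<inter> {c - d<..<c + d}" "v \<in> {a..b} \<inter> {c - d<..<c + d}"
      then have "\<bar>A u - A c\<bar> < \<epsilon>/2" "\<bar>A v - A c\<bar> < \<epsilon>/2"
        using d(2) by (auto simp: dist_real_def)
      then show "\<bar>A v - A u\<bar> \<le> \<epsilon>" by linarith
    qed
    with d(1) show ?thesis by blast
  qed
  show ?thesis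
  proof (rule eps_regulatedI)
    fix c assume "c \<in> {a..b}"
    then obtain d where "d > 0" and d: "osc_le_on \<epsilon> A ({a..b} \<inter> {c - d<..<c + d})"
      using near by blast
    have "{a..b} \<inter> {c - d<..<c} \<subseteq> {a..b} \<inter> {c - d<..<c + d}"
      "{a..b} \<inter> {c<..<c + d} \<subseteq> {a..b} \<inter> {c - d<..<c + d}"
      using \<open>d > 0\<close> by auto
    then show "\<exists>h>0. osc_le_on \<epsilon> A ({a..b} \<inter> {c - h<..<c})" "\<exists>h>0. osc_le_on \<epsilon> A ({a..b} \<inter> {c<..<c + h})"
      using \<open>d > 0\<close> osc_le_on_subset[OF d] by blast+
  qed
qed

lemma abs_diff_le_osc:
  assumes "bounded_on A a b" "a \<le> t" "t \<le> \<tau>" "\<tau> \<le> \<sigma>" "\<sigma> \<le> s" "s \<le> b"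
  shows "\<bar>A \<sigma> - A \<tau>\<bar> \<le> osc A t s"
proof -
  obtain M where M: "\<forall>s\<in>{a..b}. \<bar>A s\<bar> \<le> M" using assms(1) unfolding bounded_on_def by blast
  have "bdd_above ((\<lambda>p. \<bar>A (snd p) - A (fst p)\<bar>) ` {(\<tau>, \<sigma>). t \<le> \<tau> \<and> \<tau> \<le> \<sigma> \<and> \<sigma> \<le> s})"
  proof (rule bdd_aboveI[of _ "2 * M"])
    fix y assume "y \<in> (\<lambda>p. \<bar>A (snd p) - A (fst p)\<bar>) ` {(\<tau>, \<sigma>). t \<le> \<tau> \<and> \<tau> \<le> \<sigma> \<and> \<sigma> \<le> s}"
    then obtain p q where pq: "y = \<bar>A q - A p\<bar>" "t \<le> p" "p \<le> q" "q \<le> s" by auto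
    then have "\<bar>A p\<bar> \<le> M" "\<bar>A q\<bar> \<le> M" using M assms by auto
    then show "y \<le> 2 * M" using pq(1) by linarith
  qed
  moreover have "(\<tau>, \<sigma>) \<in> {(\<tau>, \<sigma>). t \<le> \<tau> \<and> \<tau> \<le> \<sigma> \<and> \<sigma> \<le> s}" using assms by auto
  ultimately show ?thesis unfolding osc_def
    by (metis (no_types, lifting) cSUP_upper fst_conv snd_conv)
qed

lemma Omega_eps_close:
  assumes "Omega_eps \<epsilon> a b A"
  obtains \<delta> where "\<delta> > 0" "\<And>u v. u \<in> {a..b} \<Longrightarrow> v \<in> {a..b} \<Longrightarrow> \<bar>v - u\<bar> < \<delta> \<Longrightarrow> \<bar>A v - A u\<bar> \<le> \<epsilon>"
proof -
  obtain \<delta> where \<delta>: "\<delta> > 0" "\<forall>t\<in>{a..b}. \<forall>s\<in>{a..b}. 0 \<le> s - t \<and> s - t \<le> \<delta> \<longrightarrow> osc A t s \<le> \<epsilon>"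
    using assms unfolding Omega_eps_def by blast
  have close: "\<bar>A v - A u\<bar> \<le> \<epsilon>" if "u \<in> {a..b}" "v \<in> {a..b}" "u \<le> v" "v - u < \<delta>" for u v
  proof -
    have "\<bar>A v - A u\<bar> \<le> osc A u v"
      using assms that unfolding Omega_eps_def by (intro abs_diff_le_osc) auto
    also have "\<dots> \<le> \<epsilon>" using \<delta>(2) that by auto
    finally show ?thesis .
  qed
  show thesis
  proof (rule that[OF \<delta>(1)])
    fix u v assume "u \<in> {a..b}" "v \<in> {a..b}" "\<bar>v - u\<bar> < \<delta>"
    then show "\<bar>A v - A u\<bar> \<le> \<epsilon>"
      using close[of u v] close[of v u] by (cases "u \<le> v") (auto simp: abs_minus_commute)
  qed
qed

lemma eps_regulated_if_Omega01:
  assumes "Omega01 A" "\<epsilon> > 0"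
  shows "eps_regulated \<epsilon> A 0 1"
proof -
  obtain a where a: "a \<in> {0<..<1}" "Omega_eps \<epsilon> 0 a A" "bounded_variation_on A a 1"
    using assms unfolding Omega01_def by blast
  obtain \<delta> where \<delta>: "\<delta> > 0" "\<And>u v. u \<in> {0..a} \<Longrightarrow> v \<in> {0..a} \<Longrightarrow> \<bar>v - u\<bar> < \<delta> \<Longrightarrow> \<bar>A v - A u\<bar> \<le> \<epsilon>"
    using Omega_eps_close[OF a(2)] by blast
  have near_zero: "osc_le_on \<epsilon> A S" if "S \<subseteq> {0..a}" "\<And>u v. u \<in> S \<Longrightarrow> v \<in> S \<Longrightarrow> \<bar>v - u\<bar> < \<delta>" for S
    using that \<delta>(2) unfolding osc_le_on_def by blast
  have on_bv_part: "osc_le_on \<epsilon> A S" if "osc_le_on \<epsilon> A ({a..1} \<inter> W)" "S \<subseteq> {a..1} \<inter> W" for S W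
    using that by (rule osc_le_on_subset)
  show ?thesis
  proof (rule eps_regulatedI)
    fix c :: real assume c: "c \<in> {0..1}"
    show "\<exists>h>0. osc_le_on \<epsilon> A ({0..1} \<inter> {c - h<..<c})"
    proof (cases "c \<le> a")
      case True
      then show ?thesis using \<delta>(1) by (intro exI[of _ \<delta>] conjI near_zero) auto
    next
      case False
      obtain h where "h > 0" "osc_le_on \<epsilon> A ({a..1} \<inter> {c - h<..<c})"
        using bv_left_osc[OF a(3) assms(2)] by blast
      with False show ?thesis
        by (intro exI[of _ "min h (c - a)"]) (auto elim!: on_bv_part)
    qed
    show "\<exists>h>0. osc_le_on \<epsilon> A ({0..1} \<inter> {c<..<c + h})"
    proof (cases "c < a")
      case True
      then show ?thesis
        using \<delta>(1) c by (intro exI[of _ "min \<delta> (a - c)"] conjI near_zero) auto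
    next
      case False
      obtain h where "h > 0" "osc_le_on \<epsilon> A ({a..1} \<inter> {c<..<c + h})"
        using bv_right_osc[OF a(3) assms(2)] by blast
      with False show ?thesis
        by (intro exI[of _ h]) (auto elim!: on_bv_part)
    qed
  qed
qed

section \<open>Uniform approximation by step functions\<close>

definition osc_le_off :: "real \<Rightarrow> (real \<Rightarrow> real) \<Rightarrow> real \<Rightarrow> real \<Rightarrow> real set \<Rightarrow> bool" where
  "osc_le_off \<epsilon> A a b F \<longleftrightarrow> (\<forall>u v. {u..v} \<subseteq> {a..b} - F \<longrightarrow> osc_le_on \<epsilon> A {u..v})"

lemma osc_le_offI:
  assumes "\<And>u v. u \<le> v \<Longrightarrow> {u..v} \<subseteq> {a..b} - F \<Longrightarrow> \<bar>A v - A u\<bar> \<le> \<epsilon>"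
  shows "osc_le_off \<epsilon> A a b F"
  unfolding osc_le_off_def osc_le_on_def
proof (intro allI impI ballI)
  fix u v p q assume uv: "{u..v} \<subseteq> {a..b} - F" and "p \<in> {u..v}" "q \<in> {u..v}"
  then have "{min p q..max p q} \<subseteq> {u..v}" by auto
  with uv have "{min p q..max p q} \<subseteq> {a..b} - F" by blast
  then have "\<bar>A (max p q) - A (min p q)\<bar> \<le> \<epsilon>" by (intro assms) auto
  then show "\<bar>A q - A p\<bar> \<le> \<epsilon>" by (cases "p \<le> q") (auto simp: abs_minus_commute)
qed

text \<open>Cover \<open>[a, b]\<close> by finitely many neighbourhoods \<open>(c - h, c + h)\<close> of the definition of
  \<open>eps_regulated\<close> and put all centres and endpoints \<open>c \<plusminus> h\<close> into \<open>F\<close>: an interval avoiding \<open>F\<close>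
  then lies on one side of the centre of a neighbourhood containing its left end.\<close>
lemma eps_regulated_finite_osc_le_off:
  assumes "eps_regulated \<epsilon> A a b"
  obtains F where "finite F" "a \<in> F" "b \<in> F" "osc_le_off \<epsilon> A a b F"
proof -
  obtain h where h: "\<And>c. c \<in> {a..b} \<Longrightarrow> h c > 0"
    "\<And>c. c \<in> {a..b} \<Longrightarrow> osc_le_on \<epsilon> A ({a..b} \<inter> {c - h c<..<c})"
    "\<And>c. c \<in> {a..b} \<Longrightarrow> osc_le_on \<epsilon> A ({a..b} \<inter> {c<..<c + h c})"
    using assms unfolding eps_regulated_def by metis
  have "{a..b} \<subseteq> (\<Union>c\<in>{a..b}. ball c (h c))"
    using h(1) by force
  then obtain C where C: "C \<subseteq> {a..b}" "finite C" "{a..b} \<subseteq> (\<Union>c\<in>C. ball c (h c))"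
    using compactE_image[OF compact_Icc, of "{a..b}" "\<lambda>c. ball c (h c)"] by blast
  define F where "F = C \<union> (\<lambda>c. c - h c) ` C \<union> (\<lambda>c. c + h c) ` C \<union> {a, b}"
  have "osc_le_off \<epsilon> A a b F"
  proof (rule osc_le_offI)
    fix u v assume uv: "u \<le> v" "{u..v} \<subseteq> {a..b} - F"
    then have u: "u \<in> {a..b}" and v: "v \<in> {a..b}" by auto
    then obtain c where c: "c \<in> C" "\<bar>u - c\<bar> < h c" using C(3) by (force simp: dist_real_def)
    have c_ab: "c \<in> {a..b}" using c(1) C(1) by auto
    have notin: "p \<notin> {u..v}" if "p \<in> F" for p using uv(2) that by auto
    have "c \<notin> {u..v}" "c + h c \<notin> {u..v}" using notin c(1) unfolding F_def by auto
    then consider "v < c" | "c < u" "v < c + h c" using c(2) uv(1) by fastforce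
    then show "\<bar>A v - A u\<bar> \<le> \<epsilon>"
    proof cases
      case 1
      with c(2) u v uv(1) show ?thesis using h(2)[OF c_ab] unfolding osc_le_on_def
        by (auto simp: abs_less_iff)
    next
      case 2
      with u v uv(1) show ?thesis using h(3)[OF c_ab] unfolding osc_le_on_def by auto
    qed
  qed
  moreover have "finite F" "a \<in> F" "b \<in> F" using C(2) unfolding F_def by auto
  ultimately show thesis using that by blast
qed

definition step_approx :: "real set \<Rightarrow> (real \<Rightarrow> real) \<Rightarrow> real \<Rightarrow> real" where
  "step_approx F A s =
     (if s \<in> F then A s else A ((Max {q\<in>F. q < s} + Min {q\<in>F. s < q}) / 2))"

lemma gap_around:
  assumes "finite F" "a \<in> F" "b \<in> F" "s \<in> {a..b} - F"
  defines "l \<equiv> Max {q\<in>F. q < s}" and "r \<equiv> Min {q\<in>F. s < q}"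
  shows "a \<le> l" "l < s" "s < r" "r \<le> b" "{l<..<r} \<inter> F = {}"
proof -
  have s: "a < s" "s < b" using assms(2-4) by (auto simp: order.order_iff_strict)
  have L: "finite {q\<in>F. q < s}" "a \<in> {q\<in>F. q < s}" using assms(1,2) s by auto
  have R: "finite {q\<in>F. s < q}" "b \<in> {q\<in>F. s < q}" using assms(1,3) s by auto
  have "l \<in> {q\<in>F. q < s}" unfolding l_def using L by (intro Max_in) auto
  then show "a \<le> l" "l < s" unfolding l_def using L by auto
  have "r \<in> {q\<in>F. s < q}" unfolding r_def using R by (intro Min_in) auto
  then show "s < r" "r \<le> b" unfolding r_def using R by auto
  show "{l<..<r} \<inter> F = {}"
  proof (rule ccontr)
    assume "{l<..<r} \<inter> F \<noteq> {}"
    then obtain q where q: "q \<in> F" "l < q" "q < r" by auto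
    have "q \<noteq> s" using q(1) assms(4) by auto
    show False
    proof (cases "q < s")
      case True
      then have "q \<le> l" unfolding l_def using L(1) q(1) by (intro Max_ge) auto
      with q(2) show False by simp
    next
      case False
      with \<open>q \<noteq> s\<close> have "r \<le> q" unfolding r_def using R(1) q(1) by (intro Min_le) auto
      with q(3) show False by simp
    qed
  qed
qed

lemma step_approx_close:
  assumes "finite F" "a \<in> F" "b \<in> F" "osc_le_off \<epsilon> A a b F" "\<epsilon> \<ge> 0" "s \<in> {a..b}"
  shows "\<bar>A s - step_approx F A s\<bar> \<le> \<epsilon>"
proof (cases "s \<in> F")
  case True
  then show ?thesis using assms(5) by (simp add: step_approx_def)
next
  case False
  define l r where "l = Max {q\<in>F. q < s}" and "r = Min {q\<in>F. s < q}"
  have lr: "a \<le> l" "l < s" "s < r" "r \<le> b" "{l<..<r} \<inter> F = {}"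
    using gap_around[OF assms(1-3), of s] assms(6) False unfolding l_def r_def by auto
  define m where "m = (l + r) / 2"
  have "l < m" "m < r" using lr unfolding m_def by (simp_all add: field_simps)
  then have "{min s m..max s m} \<subseteq> {l<..<r}" using lr by auto
  then have "{min s m..max s m} \<subseteq> {a..b} - F" using lr by auto
  then have "osc_le_on \<epsilon> A {min s m..max s m}" using assms(4) unfolding osc_le_off_def by blast
  then have "\<bar>A m - A s\<bar> \<le> \<epsilon>" unfolding osc_le_on_def by simp
  then show ?thesis using False by (simp add: step_approx_def m_def l_def r_def abs_minus_commute)
qed

lemma step_approx_osc_le_off:
  "osc_le_off 0 (step_approx F A) a b F"
  unfolding osc_le_off_def osc_le_on_def
proof (intro allI impI ballI)
  fix u v p q assume uv: "{u..v} \<subseteq> {a..b} - F" and pq: "p \<in> {u..v}" "q \<in> {u..v}"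
  then have "p \<notin> F" "q \<notin> F" by auto
  moreover have "x < u \<or> v < x" if "x \<in> F" for x
    using uv that by (metis Diff_iff atLeastAtMost_iff not_le subsetD)
  then have "{x\<in>F. x < p} = {x\<in>F. x < q}" "{x\<in>F. p < x} = {x\<in>F. q < x}"
    using pq by fastforce+
  ultimately show "\<bar>step_approx F A q - step_approx F A p\<bar> \<le> 0"
    by (simp add: step_approx_def)
qed

section \<open>Riemann--Stieltjes integrals\<close>

definition fine_tagged :: "real \<Rightarrow> real \<Rightarrow> real \<Rightarrow> nat \<Rightarrow> (nat \<Rightarrow> real) \<Rightarrow> (nat \<Rightarrow> real) \<Rightarrow> bool" where
  "fine_tagged \<delta> a b n t \<tau> \<longleftrightarrow> is_partition a b n t \<and> (\<forall>i<n. t (Suc i) - t i < \<delta>) \<and>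
     (\<forall>i<n. t i \<le> \<tau> i \<and> \<tau> i \<le> t (Suc i))"

definition RS_has_integral :: "(real \<Rightarrow> real) \<Rightarrow> (real \<Rightarrow> real) \<Rightarrow> real \<Rightarrow> real \<Rightarrow> real \<Rightarrow> bool" where
  "RS_has_integral A x a b I \<longleftrightarrow>
     (\<forall>\<epsilon>>0. \<exists>\<delta>>0. \<forall>n t \<tau>. fine_tagged \<delta> a b n t \<tau> \<longrightarrow> \<bar>RS_sum A x n t \<tau> - I\<bar> < \<epsilon>)"

lemma RS_integrable_iff: "RS_integrable A x a b \<longleftrightarrow> (\<exists>I. RS_has_integral A x a b I)"
  unfolding RS_integrable_def RS_has_integral_def fine_tagged_def ..

lemma RS_has_integralD:
  assumes "RS_has_integral A x a b I" "\<epsilon> > 0"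
  obtains \<delta> where "\<delta> > 0" "\<And>n t \<tau>. fine_tagged \<delta> a b n t \<tau> \<Longrightarrow> \<bar>RS_sum A x n t \<tau> - I\<bar> < \<epsilon>"
  using assms unfolding RS_has_integral_def by blast

lemma fine_tagged_mono: "fine_tagged \<delta> a b n t \<tau> \<Longrightarrow> \<delta> \<le> \<delta>' \<Longrightarrow> fine_tagged \<delta>' a b n t \<tau>"
  unfolding fine_tagged_def by force

lemma fine_tagged_tag_in:
  assumes "fine_tagged \<delta> a b n t \<tau>" "i < n"
  shows "\<tau> i \<in> {a..b}"
  using assms partition_in_interval[of a b n t i] partition_in_interval[of a b n t "Suc i"]
  unfolding fine_tagged_def by fastforce

lemma fine_tagged_exists:
  assumes "a \<le> b" "\<delta> > 0"
  obtains n t \<tau> where "fine_tagged \<delta> a b n t \<tau>"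
proof (cases "a = b")
  case True
  then have "fine_tagged \<delta> a b 0 (\<lambda>_. a) id" unfolding fine_tagged_def is_partition_def by simp
  then show thesis by (rule that)
next
  case False
  obtain N :: nat where N: "(b - a) / \<delta> < real N" using reals_Archimedean2 by blast
  moreover have "0 < (b - a) / \<delta>" using assms False by simp
  ultimately have "N > 0" by simp
  define h where "h = (b - a) / real N"
  have h: "0 < h" "h < \<delta>"
    using N \<open>N > 0\<close> assms False unfolding h_def by (auto simp: field_simps)
  define t where "t i = a + real i * h" for i
  have step: "t (Suc i) - t i = h" for i unfolding t_def by (simp add: algebra_simps)
  then have less: "t i < t (Suc i)" for i using h(1) by (metis diff_gt_0_iff_gt)
  moreover have "t 0 = a" "t N = b" unfolding t_def h_def using \<open>N > 0\<close> by simp_all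
  ultimately have "is_partition a b N t" unfolding is_partition_def by simp
  with step have "fine_tagged \<delta> a b N t t" unfolding fine_tagged_def using h less less_imp_le by auto
  then show thesis by (rule that)
qed

lemma RS_has_integral_add:
  assumes "RS_has_integral A x a b I" "RS_has_integral B x a b J"
  shows "RS_has_integral (\<lambda>s. A s + B s) x a b (I + J)"
  unfolding RS_has_integral_def
proof (intro allI impI)
  fix \<epsilon> :: real assume "\<epsilon> > 0"
  then have "\<epsilon>/2 > 0" by simp
  obtain \<delta>1 where "\<delta>1 > 0"
    and \<delta>1: "\<And>n t \<tau>. fine_tagged \<delta>1 a b n t \<tau> \<Longrightarrow> \<bar>RS_sum A x n t \<tau> - I\<bar> < \<epsilon>/2"
    using RS_has_integralD[OF assms(1) \<open>\<epsilon>/2 > 0\<close>] by blast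
  obtain \<delta>2 where "\<delta>2 > 0"
    and \<delta>2: "\<And>n t \<tau>. fine_tagged \<delta>2 a b n t \<tau> \<Longrightarrow> \<bar>RS_sum B x n t \<tau> - J\<bar> < \<epsilon>/2"
    using RS_has_integralD[OF assms(2) \<open>\<epsilon>/2 > 0\<close>] by blast
  have "\<bar>RS_sum (\<lambda>s. A s + B s) x n t \<tau> - (I + J)\<bar> < \<epsilon>" if "fine_tagged (min \<delta>1 \<delta>2) a b n t \<tau>" for n t \<tau>
  proof -
    have "RS_sum (\<lambda>s. A s + B s) x n t \<tau> = RS_sum A x n t \<tau> + RS_sum B x n t \<tau>"
      unfolding RS_sum_def by (simp add: distrib_right sum.distrib)
    moreover have "\<bar>RS_sum A x n t \<tau> - I\<bar> < \<epsilon>/2" "\<bar>RS_sum B x n t \<tau> - J\<bar> < \<epsilon>/2"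
      using \<delta>1 \<delta>2 fine_tagged_mono[OF that] by auto
    ultimately show ?thesis by linarith
  qed
  with \<open>\<delta>1 > 0\<close> \<open>\<delta>2 > 0\<close> show "\<exists>\<delta>>0. \<forall>n t \<tau>. fine_tagged \<delta> a b n t \<tau> \<longrightarrow>
      \<bar>RS_sum (\<lambda>s. A s + B s) x n t \<tau> - (I + J)\<bar> < \<epsilon>"
    by (intro exI[of _ "min \<delta>1 \<delta>2"]) auto
qed

lemma RS_integrable_add:
  "RS_integrable A x a b \<Longrightarrow> RS_integrable B x a b \<Longrightarrow> RS_integrable (\<lambda>s. A s + B s) x a b"
  using RS_has_integral_add unfolding RS_integrable_iff by blast

lemma partition_telescope:
  assumes "is_partition a b n t"
  shows "(\<Sum>i<n. f (t (Suc i)) - f (t i)) = f b - (f a :: real)"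
  using sum_lessThan_telescope[of "\<lambda>i. f (t i)" n] assms unfolding is_partition_def by simp

lemma RS_has_integral_const:
  assumes "\<forall>s\<in>{a..b}. B s = c"
  shows "RS_has_integral B x a b (c * (x b - x a))"
proof -
  have "RS_sum B x n t \<tau> = c * (x b - x a)" if "fine_tagged 1 a b n t \<tau>" for n t \<tau>
  proof -
    have "RS_sum B x n t \<tau> = c * (\<Sum>i<n. x (t (Suc i)) - x (t i))"
      unfolding RS_sum_def sum_distrib_left
      using assms fine_tagged_tag_in[OF that] by (intro sum.cong) auto
    with that show ?thesis using partition_telescope unfolding fine_tagged_def by metis
  qed
  then show ?thesis unfolding RS_has_integral_def by (intro allI impI exI[of _ 1]) auto
qed

lemma RS_sum_diff_le:
  assumes "fine_tagged \<delta> a b n t \<tau>" "\<forall>s\<in>{a..b}. \<bar>A s - B s\<bar> \<le> e"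
  shows "\<bar>RS_sum A x n t \<tau> - RS_sum B x n t \<tau>\<bar> \<le> e * var_sum x n t"
proof -
  have "\<bar>RS_sum A x n t \<tau> - RS_sum B x n t \<tau>\<bar>
      = \<bar>\<Sum>i<n. (A (\<tau> i) - B (\<tau> i)) * (x (t (Suc i)) - x (t i))\<bar>"
    unfolding RS_sum_def by (simp add: sum_subtractf left_diff_distrib)
  also have "\<dots> \<le> (\<Sum>i<n. \<bar>A (\<tau> i) - B (\<tau> i)\<bar> * \<bar>x (t (Suc i)) - x (t i)\<bar>)"
    by (rule order_trans[OF sum_abs]) (simp add: abs_mult)
  also have "\<dots> \<le> (\<Sum>i<n. e * \<bar>x (t (Suc i)) - x (t i)\<bar>)"
    using assms fine_tagged_tag_in[OF assms(1)] by (intro sum_mono mult_right_mono) auto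
  finally show ?thesis by (simp add: sum_distrib_left)
qed

lemma partition_intervals_containing:
  assumes "is_partition a b n t"
  shows "card {i. i < n \<and> t i \<le> p \<and> p \<le> t (Suc i)} \<le> 2"
proof -
  define S where "S = {i. i < n \<and> t i \<le> p \<and> p \<le> t (Suc i)}"
  have "finite S" unfolding S_def by simp
  show ?thesis
  proof (cases "S = {}")
    case False
    define m where "m = Min S"
    have m: "m \<in> S" "\<And>j. j \<in> S \<Longrightarrow> m \<le> j"
      unfolding m_def using \<open>finite S\<close> False by (auto intro: Min_in)
    have "S \<subseteq> {m, Suc m}"
    proof
      fix j assume j: "j \<in> S"
      show "j \<in> {m, Suc m}"
      proof (rule ccontr)
        assume "j \<notin> {m, Suc m}"
        with m(2)[OF j] have "t (Suc m) < t j"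
          using j partition_strict_mono[OF assms] unfolding S_def by simp
        with m(1) j show False unfolding S_def by simp
      qed
    qed
    then have "card S \<le> card {m, Suc m}" by (intro card_mono) auto
    then show ?thesis unfolding S_def by (simp add: card_insert_if)
  next
    case True
    then show ?thesis unfolding S_def[symmetric] by simp
  qed
qed

lemma jump_RS_term_away:
  fixes t0 t1 \<tau> p \<alpha> \<beta> \<gamma> :: real and x :: "real \<Rightarrow> real"
  assumes "t0 \<le> \<tau>" "\<tau> \<le> t1" "t1 < p \<or> p < t0"
  shows "(if \<tau> < p then \<alpha> else if \<tau> = p then \<gamma> else \<beta>) * (x t1 - x t0) =
    \<alpha> * (x (min p t1) - x (min p t0)) + \<beta> * (x (max p t1) - x (max p t0))"
  using assms(3)
proof
  assume "t1 < p"
  with assms(1,2) have "\<tau> < p" "min p t1 = t1" "min p t0 = t0" "max p t1 = p" "max p t0 = p"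
    by (auto simp: min_def max_def)
  then show ?thesis by simp
next
  assume "p < t0"
  with assms(1,2) have "p < \<tau>" "min p t1 = p" "min p t0 = p" "max p t1 = t1" "max p t0 = t0"
    by (auto simp: min_def max_def)
  then show ?thesis by simp
qed

text \<open>The Riemann--Stieltjes sums of a single jump at \<open>p\<close> agree with the integral exactly on every
  subinterval not containing \<open>p\<close>, and \<open>p\<close> lies in at most two subintervals, where the error is
  controlled by the continuity of \<open>x\<close>.\<close>
lemma RS_has_integral_jump:
  fixes \<alpha> \<beta> \<gamma> :: real
  assumes x: "continuous_on {a..b} x" and p: "p \<in> {a..b}"
  defines "G \<equiv> \<lambda>s. if s < p then \<alpha> else if s = p then \<gamma> else \<beta>"
  shows "RS_has_integral G x a b (\<alpha> * (x p - x a) + \<beta> * (x b - x p))"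
  unfolding RS_has_integral_def
proof (intro allI impI)
  fix \<epsilon> :: real assume "\<epsilon> > 0"
  define C where "C = \<bar>\<alpha>\<bar> + \<bar>\<beta>\<bar> + \<bar>\<gamma>\<bar> + 1"
  define e where "e = \<epsilon> / (8 * C)"
  have "C > 0" unfolding C_def by simp
  then have "e > 0" unfolding e_def using \<open>\<epsilon> > 0\<close> by simp
  obtain \<delta> where "\<delta> > 0" and \<delta>: "\<And>u v. u \<in> {a..b} \<Longrightarrow> v \<in> {a..b} \<Longrightarrow> \<bar>v - u\<bar> < \<delta> \<Longrightarrow> \<bar>x v - x u\<bar> < e"
    using compact_uniformly_continuous[OF x compact_Icc] \<open>e > 0\<close>
    unfolding uniformly_continuous_on_def dist_real_def by metis
  have "\<bar>RS_sum G x n t \<tau> - (\<alpha> * (x p - x a) + \<beta> * (x b - x p))\<bar> < \<epsilon>"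
    if fine: "fine_tagged \<delta> a b n t \<tau>" for n t \<tau>
  proof -
    have P: "is_partition a b n t" and mesh: "\<And>i. i < n \<Longrightarrow> t (Suc i) - t i < \<delta>"
      and tag: "\<And>i. i < n \<Longrightarrow> t i \<le> \<tau> i \<and> \<tau> i \<le> t (Suc i)"
      using fine unfolding fine_tagged_def by auto
    define err where "err i = G (\<tau> i) * (x (t (Suc i)) - x (t i)) -
      (\<alpha> * (x (min p (t (Suc i))) - x (min p (t i))) + \<beta> * (x (max p (t (Suc i))) - x (max p (t i))))"
      for i
    define S where "S = {i. i < n \<and> t i \<le> p \<and> p \<le> t (Suc i)}"
    have "(\<Sum>i<n. x (min p (t (Suc i))) - x (min p (t i))) = x p - x a"
      using partition_telescope[OF P, of "\<lambda>s. x (min p s)"] p P unfolding is_partition_def by simp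
    moreover have "(\<Sum>i<n. x (max p (t (Suc i))) - x (max p (t i))) = x b - x p"
      using partition_telescope[OF P, of "\<lambda>s. x (max p s)"] p P unfolding is_partition_def by simp
    ultimately have "RS_sum G x n t \<tau> - (\<alpha> * (x p - x a) + \<beta> * (x b - x p)) = (\<Sum>i<n. err i)"
      unfolding RS_sum_def err_def
      by (simp add: sum_subtractf sum.distrib sum_distrib_left[symmetric])
    also have "\<bar>\<dots>\<bar> \<le> (\<Sum>i<n. \<bar>err i\<bar>)" by (rule sum_abs)
    also have "\<dots> = (\<Sum>i\<in>S. \<bar>err i\<bar>)"
    proof (rule sum.mono_neutral_right)
      show "\<forall>i\<in>{..<n} - S. \<bar>err i\<bar> = 0"
      proof
        fix i assume "i \<in> {..<n} - S"
        then have "i < n" "t (Suc i) < p \<or> p < t i" unfolding S_def by auto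
        then show "\<bar>err i\<bar> = 0" using tag[of i] unfolding err_def G_def by (simp add: jump_RS_term_away)
      qed
    qed (auto simp: S_def)
    also have "\<dots> \<le> (\<Sum>i\<in>S. 2 * C * e)"
    proof (rule sum_mono)
      fix i assume "i \<in> S"
      then have i: "i < n" "t i \<le> p" "p \<le> t (Suc i)" unfolding S_def by auto
      have ti: "t i \<in> {a..b}" "t (Suc i) \<in> {a..b}"
        using partition_in_interval[OF P] i(1) by auto
      have "t (Suc i) - t i < \<delta>" using mesh i(1) .
      then have "\<bar>x (t (Suc i)) - x (t i)\<bar> < e" "\<bar>x p - x (t i)\<bar> < e" "\<bar>x (t (Suc i)) - x p\<bar> < e"
        using \<delta> ti p i(2,3) by auto
      moreover have "\<bar>G (\<tau> i)\<bar> \<le> \<bar>\<alpha>\<bar> + \<bar>\<beta>\<bar> + \<bar>\<gamma>\<bar>" unfolding G_def by auto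
      ultimately have "\<bar>G (\<tau> i) * (x (t (Suc i)) - x (t i))\<bar> \<le> (\<bar>\<alpha>\<bar> + \<bar>\<beta>\<bar> + \<bar>\<gamma>\<bar>) * e"
        "\<bar>\<alpha> * (x p - x (t i))\<bar> \<le> \<bar>\<alpha>\<bar> * e" "\<bar>\<beta> * (x (t (Suc i)) - x p)\<bar> \<le> \<bar>\<beta>\<bar> * e"
        unfolding abs_mult by (auto intro!: mult_mono)
      moreover have "err i = G (\<tau> i) * (x (t (Suc i)) - x (t i)) - (\<alpha> * (x p - x (t i)) + \<beta> * (x (t (Suc i)) - x p))"
        using i(2,3) unfolding err_def by (simp add: min_def max_def)
      ultimately have "\<bar>err i\<bar> \<le> (\<bar>\<alpha>\<bar> + \<bar>\<beta>\<bar> + \<bar>\<gamma>\<bar>) * e + \<bar>\<alpha>\<bar> * e + \<bar>\<beta>\<bar> * e" by linarith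
      also have "\<dots> \<le> 2 * C * e" unfolding C_def using \<open>e > 0\<close> by (simp add: algebra_simps)
      finally show "\<bar>err i\<bar> \<le> 2 * C * e" .
    qed
    also have "\<dots> \<le> 2 * (2 * C * e)"
      using partition_intervals_containing[OF P, of p] \<open>C > 0\<close> \<open>e > 0\<close> unfolding S_def
      by (simp add: mult_right_mono)
    also have "\<dots> < \<epsilon>" unfolding e_def using \<open>C > 0\<close> \<open>\<epsilon> > 0\<close> by (simp add: field_simps)
    finally show ?thesis .
  qed
  with \<open>\<delta> > 0\<close> show "\<exists>\<delta>>0. \<forall>n t \<tau>. fine_tagged \<delta> a b n t \<tau> \<longrightarrow>
      \<bar>RS_sum G x n t \<tau> - (\<alpha> * (x p - x a) + \<beta> * (x b - x p))\<bar> < \<epsilon>"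
    by blast
qed

lemma osc_le_off_zero_eq:
  assumes "osc_le_off 0 B a b F" "{min u v..max u v} \<subseteq> {a..b} - F"
  shows "B u = B v"
proof -
  have "osc_le_on 0 B {min u v..max u v}" using assms unfolding osc_le_off_def by blast
  then have "\<bar>B v - B u\<bar> \<le> 0" unfolding osc_le_on_def by simp
  then show ?thesis by simp
qed

lemma isolating_interval:
  assumes "finite F" "p \<notin> F"
  obtains \<eta> :: real where "\<eta> > 0" "{p - \<eta>..p + \<eta>} \<inter> F = {}"
proof -
  obtain d where "d > 0" and d: "\<forall>q\<in>F. q \<noteq> p \<longrightarrow> d \<le> dist p q"
    using finite_set_avoid[OF assms(1)] by blast
  have "{p - d/2..p + d/2} \<inter> F = {}"
  proof (rule ccontr)
    assume "{p - d/2..p + d/2} \<inter> F \<noteq> {}"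
    then obtain q where q: "q \<in> F" "p - d/2 \<le> q" "q \<le> p + d/2" by auto
    then have "dist p q < d" using \<open>d > 0\<close> by (auto simp: dist_real_def abs_less_iff)
    moreover have "q \<noteq> p" using q(1) assms(2) by auto
    ultimately show False using d q(1) by force
  qed
  with \<open>d > 0\<close> show thesis by (intro that[of "d/2"]) auto
qed

text \<open>\<open>osc_le_off 0 B a b F\<close> says that \<open>B\<close> is a step function with jumps in \<open>F\<close>. Induction on \<open>F\<close>:
  removing a point \<open>p\<close> amounts to subtracting a single jump at \<open>p\<close>, whose left and right values are
  those of \<open>B\<close> just beside \<open>p\<close>.\<close>
lemma RS_integrable_step:
  assumes x: "continuous_on {a..b} x"
  shows "finite F \<Longrightarrow> osc_le_off 0 B a b F \<Longrightarrow> RS_integrable B x a b"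
proof (induction F arbitrary: B rule: finite_induct)
  case empty
  have "B s = B a" if "s \<in> {a..b}" for s
    using osc_le_off_zero_eq[OF empty.prems, of s a] that by auto
  then show ?case using RS_has_integral_const RS_integrable_iff by blast
next
  case (insert p F)
  have B_eq: "B u = B v" if "{min u v..max u v} \<subseteq> {a..b} - insert p F" for u v
    using osc_le_off_zero_eq[OF insert.prems that] .
  show ?case
  proof (cases "p \<in> {a..b}")
    case False
    have "osc_le_off 0 B a b F"
      using insert.prems False unfolding osc_le_off_def by blast
    then show ?thesis by (rule insert.IH)
  next
    case True
    obtain \<eta> where "\<eta> > 0" and \<eta>: "{p - \<eta>..p + \<eta>} \<inter> F = {}"
      using isolating_interval[OF insert.hyps] .
    define wl wr where "wl = max a (p - \<eta>)" and "wr = min b (p + \<eta>)"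
    define c where "c = (if a < p then B wl else B wr)"
    have left: "B u = c" if u: "u \<in> {a..<p}" "{u..p} \<inter> F = {}" for u
    proof -
      have "{min u wl..max u wl} \<subseteq> ({u..p} \<union> {p - \<eta>..p + \<eta>}) \<inter> {a..<p}"
        using u(1) \<open>\<eta> > 0\<close> unfolding wl_def by (auto simp: min_def max_def)
      then have "{min u wl..max u wl} \<subseteq> {a..b} - insert p F"
        using u(2) \<eta> True by auto
      then show ?thesis using B_eq u(1) unfolding c_def by auto
    qed
    have right: "B v = B wr" if v: "v \<in> {p<..b}" "{p..v} \<inter> F = {}" for v
    proof -
      have "{min v wr..max v wr} \<subseteq> ({p..v} \<union> {p - \<eta>..p + \<eta>}) \<inter> {p<..b}"
        using v(1) \<open>\<eta> > 0\<close> unfolding wr_def by (auto simp: min_def max_def)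
      then have "{min v wr..max v wr} \<subseteq> {a..b} - insert p F"
        using v(2) \<eta> True by auto
      then show ?thesis using B_eq by blast
    qed
    define B' where "B' s = (if s < p then B s else if s = p then c else B s + c - B wr)" for s
    have "osc_le_off 0 B' a b F"
    proof (rule osc_le_offI)
      fix u v assume uv: "u \<le> v" "{u..v} \<subseteq> {a..b} - F"
      consider "v < p" | "p < u" | "u \<le> p" "p \<le> v" by linarith
      then show "\<bar>B' v - B' u\<bar> \<le> 0"
      proof cases
        case 1
        with uv have "B u = B v" by (intro B_eq) auto
        with 1 uv(1) show ?thesis unfolding B'_def by simp
      next
        case 2
        with uv have "B u = B v" by (intro B_eq) auto
        with 2 uv(1) show ?thesis unfolding B'_def by simp
      next
        case 3
        have "{u..v} \<inter> F = {}" using uv(2) by auto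
        moreover have "{u..p} \<inter> F \<subseteq> {u..v} \<inter> F" "{p..v} \<inter> F \<subseteq> {u..v} \<inter> F" using 3 by auto
        ultimately have no_F: "{u..p} \<inter> F = {}" "{p..v} \<inter> F = {}" by auto
        have "u \<in> {a..b}" "v \<in> {a..b}" using uv by auto
        with no_F 3 have "B' u = c" "B' v = c"
          using left[of u] right[of v] unfolding B'_def by auto
        then show ?thesis by simp
      qed
    qed
    then have "RS_integrable B' x a b" by (rule insert.IH)
    moreover have "RS_integrable (\<lambda>s. if s < p then 0 else if s = p then B p - c else B wr - c) x a b"
      using RS_has_integral_jump[OF x True] RS_integrable_iff by blast
    ultimately have "RS_integrable (\<lambda>s. B' s + (if s < p then 0 else if s = p then B p - c else B wr - c)) x a b"
      by (rule RS_integrable_add)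
    moreover have "(\<lambda>s. B' s + (if s < p then 0 else if s = p then B p - c else B wr - c)) = B"
      unfolding B'_def by auto
    ultimately show ?thesis by simp
  qed
qed

lemma RS_has_integral_close:
  assumes "a \<le> b" "RS_has_integral A x a b I" "RS_has_integral B x a b J"
    and AB: "\<forall>s\<in>{a..b}. \<bar>A s - B s\<bar> \<le> e" and M: "\<And>n t. is_partition a b n t \<Longrightarrow> var_sum x n t \<le> M"
  shows "\<bar>I - J\<bar> \<le> e * M"
proof (rule field_le_epsilon)
  fix \<eta> :: real assume "\<eta> > 0"
  then have "\<eta>/2 > 0" by simp
  obtain \<delta>1 where "\<delta>1 > 0" and \<delta>1: "\<And>n t \<tau>. fine_tagged \<delta>1 a b n t \<tau> \<Longrightarrow> \<bar>RS_sum A x n t \<tau> - I\<bar> < \<eta>/2"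
    using RS_has_integralD[OF assms(2) \<open>\<eta>/2 > 0\<close>] by blast
  obtain \<delta>2 where "\<delta>2 > 0" and \<delta>2: "\<And>n t \<tau>. fine_tagged \<delta>2 a b n t \<tau> \<Longrightarrow> \<bar>RS_sum B x n t \<tau> - J\<bar> < \<eta>/2"
    using RS_has_integralD[OF assms(3) \<open>\<eta>/2 > 0\<close>] by blast
  obtain n t \<tau> where fine: "fine_tagged (min \<delta>1 \<delta>2) a b n t \<tau>"
    using fine_tagged_exists[OF assms(1)] \<open>\<delta>1 > 0\<close> \<open>\<delta>2 > 0\<close> by (metis min_less_iff_conj)
  have "e \<ge> 0" using AB assms(1) by force
  have "\<bar>RS_sum A x n t \<tau> - RS_sum B x n t \<tau>\<bar> \<le> e * var_sum x n t"
    using RS_sum_diff_le[OF fine AB] .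
  also have "\<dots> \<le> e * M"
    using M fine \<open>e \<ge> 0\<close> unfolding fine_tagged_def by (simp add: mult_left_mono)
  moreover have "\<bar>RS_sum A x n t \<tau> - I\<bar> < \<eta>/2" "\<bar>RS_sum B x n t \<tau> - J\<bar> < \<eta>/2"
    using \<delta>1 \<delta>2 fine_tagged_mono[OF fine] by simp_all
  ultimately show "\<bar>I - J\<bar> \<le> e * M + \<eta>" by linarith
qed

lemma RS_integrable_uniform_limit:
  assumes "a \<le> b" "bounded_variation_on x a b"
    and approx: "\<And>e. e > 0 \<Longrightarrow> \<exists>B. RS_integrable B x a b \<and> (\<forall>s\<in>{a..b}. \<bar>A s - B s\<bar> \<le> e)"
  shows "RS_integrable A x a b"
proof -
  obtain M where M: "\<And>n t. is_partition a b n t \<Longrightarrow> var_sum x n t \<le> M"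
    using assms(2) unfolding bounded_variation_on_def by blast
  define r where "r k = M / real (Suc k)" for k
  have "r \<longlonglongrightarrow> 0"
    using tendsto_mult_right_zero[OF LIMSEQ_inverse_real_of_nat, of M]
    unfolding r_def by (simp add: divide_inverse)
  have "\<forall>k. \<exists>B. RS_integrable B x a b \<and> (\<forall>s\<in>{a..b}. \<bar>A s - B s\<bar> \<le> 1 / real (Suc k))"
  proof
    fix k
    have "1 / real (Suc k) > 0" by simp
    then show "\<exists>B. RS_integrable B x a b \<and> (\<forall>s\<in>{a..b}. \<bar>A s - B s\<bar> \<le> 1 / real (Suc k))"
      by (rule approx)
  qed
  from choice[OF this] obtain B where
    B: "\<forall>k. RS_integrable (B k) x a b \<and> (\<forall>s\<in>{a..b}. \<bar>A s - B k s\<bar> \<le> 1 / real (Suc k))" ..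
  then have approx_k: "\<And>k. \<forall>s\<in>{a..b}. \<bar>A s - B k s\<bar> \<le> 1 / real (Suc k)" by blast
  have "\<forall>k. \<exists>I. RS_has_integral (B k) x a b I" using B unfolding RS_integrable_iff by blast
  from choice[OF this] obtain I where BI: "\<And>k. RS_has_integral (B k) x a b (I k)" by blast
  have "\<bar>I k - I l\<bar> \<le> r k + r l" for k l
  proof -
    have "\<forall>s\<in>{a..b}. \<bar>B k s - B l s\<bar> \<le> 1 / real (Suc k) + 1 / real (Suc l)"
      using approx_k[of k] approx_k[of l] by (fastforce simp: abs_minus_commute)
    from RS_has_integral_close[OF assms(1) BI BI this M] show ?thesis
      unfolding r_def by (simp add: distrib_right)
  qed
  have "Cauchy I"
  proof (rule metric_CauchyI)
    fix e :: real assume "e > 0"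
    then obtain N where N: "\<And>k. k \<ge> N \<Longrightarrow> \<bar>r k\<bar> < e/2"
      using LIMSEQ_D[OF \<open>r \<longlonglongrightarrow> 0\<close>, of "e/2"] by auto
    have "dist (I m) (I n) < e" if "m \<ge> N" "n \<ge> N" for m n
      using \<open>\<And>k l. \<bar>I k - I l\<bar> \<le> r k + r l\<close>[of m n] N[OF that(1)] N[OF that(2)]
      unfolding dist_real_def by linarith
    then show "\<exists>N. \<forall>m\<ge>N. \<forall>n\<ge>N. dist (I m) (I n) < e" by blast
  qed
  then obtain L where "I \<longlonglongrightarrow> L" using Cauchy_convergent_iff convergent_def by blast
  have "RS_has_integral A x a b L"
    unfolding RS_has_integral_def
  proof (intro allI impI)
    fix \<epsilon> :: real assume "\<epsilon> > 0"
    then have "\<epsilon>/3 > 0" by simp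
    have "eventually (\<lambda>k. \<bar>I k - L\<bar> < \<epsilon>/3) sequentially"
      using tendstoD[OF \<open>I \<longlonglongrightarrow> L\<close> \<open>\<epsilon>/3 > 0\<close>] by (simp add: dist_real_def)
    moreover have "eventually (\<lambda>k. \<bar>r k\<bar> < \<epsilon>/3) sequentially"
      using tendstoD[OF \<open>r \<longlonglongrightarrow> 0\<close> \<open>\<epsilon>/3 > 0\<close>] by simp
    ultimately have "eventually (\<lambda>k. \<bar>I k - L\<bar> < \<epsilon>/3 \<and> \<bar>r k\<bar> < \<epsilon>/3) sequentially"
      by (rule eventually_conj)
    then obtain k where k: "\<bar>I k - L\<bar> < \<epsilon>/3" "\<bar>r k\<bar> < \<epsilon>/3"
      using eventually_sequentially by auto
    obtain \<delta> where "\<delta> > 0" and \<delta>: "\<And>n t \<tau>. fine_tagged \<delta> a b n t \<tau> \<Longrightarrow> \<bar>RS_sum (B k) x n t \<tau> - I k\<bar> < \<epsilon>/3"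
      using RS_has_integralD[OF BI \<open>\<epsilon>/3 > 0\<close>] by blast
    have "\<bar>RS_sum A x n t \<tau> - L\<bar> < \<epsilon>" if fine: "fine_tagged \<delta> a b n t \<tau>" for n t \<tau>
    proof -
      have "\<bar>RS_sum A x n t \<tau> - RS_sum (B k) x n t \<tau>\<bar> \<le> 1 / real (Suc k) * var_sum x n t"
        using RS_sum_diff_le[OF fine approx_k] .
      also have "\<dots> \<le> r k"
        using M fine unfolding fine_tagged_def r_def by (simp add: divide_right_mono)
      finally show ?thesis using \<delta>[OF fine] k by linarith
    qed
    with \<open>\<delta> > 0\<close> show "\<exists>\<delta>>0. \<forall>n t \<tau>. fine_tagged \<delta> a b n t \<tau> \<longrightarrow> \<bar>RS_sum A x n t \<tau> - L\<bar> < \<epsilon>"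
      by blast
  qed
  then show ?thesis unfolding RS_integrable_iff by blast
qed

lemma RS_integrable_if_eps_regulated:
  assumes "a \<le> b" "continuous_on {a..b} x" "bounded_variation_on x a b"
    and "\<And>\<epsilon>. \<epsilon> > 0 \<Longrightarrow> eps_regulated \<epsilon> A a b"
  shows "RS_integrable A x a b"
proof (rule RS_integrable_uniform_limit[OF assms(1,3)])
  fix e :: real assume "e > 0"
  then obtain F where F: "finite F" "a \<in> F" "b \<in> F" "osc_le_off e A a b F"
    using eps_regulated_finite_osc_le_off assms(4) by metis
  have "RS_integrable (step_approx F A) x a b"
    using RS_integrable_step[OF assms(2) F(1) step_approx_osc_le_off] .
  moreover have "\<forall>s\<in>{a..b}. \<bar>A s - step_approx F A s\<bar> \<le> e"
    using step_approx_close[OF F] \<open>e > 0\<close> by simp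
  ultimately show "\<exists>B. RS_integrable B x a b \<and> (\<forall>s\<in>{a..b}. \<bar>A s - B s\<bar> \<le> e)" by blast
qed

theorem lemma4p12:
  fixes x A :: "real \<Rightarrow> real"
  assumes "continuous_on {0..1} x" and "bounded_variation_on x 0 1"
    and "Omega_hat01 A"
  shows "RS_integrable A x 0 1"
proof (rule RS_integrable_if_eps_regulated[OF _ assms(1,2)])
  fix \<epsilon> :: real assume "\<epsilon> > 0"
  from assms(3) consider "Omega01 A" | "continuous_on {0..1} A" | "bounded_variation_on A 0 1"
    unfolding Omega_hat01_def by blast
  then show "eps_regulated \<epsilon> A 0 1"
    by cases (use \<open>\<epsilon> > 0\<close> eps_regulated_if_Omega01 eps_regulated_if_continuous eps_regulated_if_bv in blast)+
qed simp

end
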